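(* If $A$ is a coherent $\mathbb{Z}$-algebra, then the sequence $(P_i)_{i\in\mathbb{Z}}$ in the abelian category $\operatorname{coh}A$ is a coherent sequence.
   Context: $k$ is a fixed field. A $\mathbb{Z}$-algebra is an associative $k$-algebra $A=\bigoplus_{i\le j}A_{ij}$ with $A_{ii}=k$, only nonzero products $A_{jk}\otimes A_{ij}\to A_{ik}$, units acting as identity, $\dim A_{ij}<\infty$. An $A$-module is a graded right module $M=\bigoplus_iM_i$ with action $M_j\otimes A_{ij}\to M_i$. $P_j=\bigoplus_iA_{ij}$; $S_j$ is $k$ in degree $j$ and $0$ elsewhere; $\mathcal{P}$ = finite direct sums of $P_j$'s. $M$ is finitely generated if a quotient of some $P\in\mathcal{P}$; coherent if finitely generated and every kernel of a map $P\to M$, $P\in\mathcal{P}$, is finitely generated. $\operatorname{coh}A$ is the (abelian) full subcategory of coherent modules. $A$ is coherent if all $P_j$, $S_j$ are coherent. For a sequence $(E_i)$ in an abelian $k$-linear category $\mathcal{C}$ (with $\dim\operatorname{Hom}(E_i,X)<\infty$ for all $X$): it is projective if for every surjection $X\to Y$ there is $n$ such that $\operatorname{Hom}(E_i,X)\to\operatorname{Hom}(E_i,Y)$ is surjective for $i<n$; a projective sequence is coherent if for every $X\in\mathcal{C}$ and $m\in\mathbb{Z}$ there are $i_1,\dots,i_s\le m$ such that $\bigoplus_j\operatorname{Hom}(E_{i_j},X)\otimes\operatorname{Hom}(E_i,E_{i_j})\to\operatorname{Hom}(E_i,X)$ is surjective for $i\ll0$. *)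

theory Defs
  imports Main
begin

text \<open>All graded pieces (of the Z-algebra and of its modules) are realised as
k-subspaces of the ambient k-vector space of functions nat \<Rightarrow> 'k, with pointwise
operations.  Every finite-dimensional k-space embeds there.\<close>

type_synonym 'k vec = "nat \<Rightarrow> 'k"

definition vzero :: "'k::field vec" where
  "vzero = (\<lambda>_. 0)"

definition vadd :: "'k::field vec \<Rightarrow> 'k vec \<Rightarrow> 'k vec" where
  "vadd v w = (\<lambda>n. v n + w n)"

definition vscale :: "'k::field \<Rightarrow> 'k vec \<Rightarrow> 'k vec" where
  "vscale c v = (\<lambda>n. c * v n)"

definition vsum :: "('a \<Rightarrow> 'k::field vec) \<Rightarrow> 'a set \<Rightarrow> 'k vec" where
  "vsum f S = (\<lambda>n. \<Sum>x\<in>S. f x n)"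

definition is_subspace :: "'k::field vec set \<Rightarrow> bool" where
  "is_subspace S \<longleftrightarrow> vzero \<in> S \<and> (\<forall>v\<in>S. \<forall>w\<in>S. vadd v w \<in> S)
      \<and> (\<forall>c v. v \<in> S \<longrightarrow> vscale c v \<in> S)"

definition lspan :: "'k::field vec set \<Rightarrow> 'k vec set" where
  "lspan B = {vsum (\<lambda>b. vscale (c b) b) B' | c B'. finite B' \<and> B' \<subseteq> B}"

definition fin_dim :: "'k::field vec set \<Rightarrow> bool" where
  "fin_dim S \<longleftrightarrow> (\<exists>B. finite B \<and> B \<subseteq> S \<and> lspan B = S)"

definition linear_on :: "'k::field vec set \<Rightarrow> 'k vec set \<Rightarrow> ('k vec \<Rightarrow> 'k vec) \<Rightarrow> bool" where
  "linear_on S T f \<longleftrightarrow> (\<forall>v\<in>S. f v \<in> T)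
      \<and> (\<forall>v\<in>S. \<forall>w\<in>S. f (vadd v w) = vadd (f v) (f w))
      \<and> (\<forall>c. \<forall>v\<in>S. f (vscale c v) = vscale c (f v))"

definition bilinear_on :: "'k::field vec set \<Rightarrow> 'k vec set \<Rightarrow> 'k vec set
      \<Rightarrow> ('k vec \<Rightarrow> 'k vec \<Rightarrow> 'k vec) \<Rightarrow> bool" where
  "bilinear_on S T U g \<longleftrightarrow> (\<forall>v\<in>S. linear_on T U (g v)) \<and> (\<forall>w\<in>T. linear_on S U (\<lambda>v. g v w))"

text \<open>Asp A i j is the graded piece A_ij (meaningful for i \<le> j, zero otherwise);
amul A i j l a b is the product a b for a \<in> A_jl, b \<in> A_ij, lying in A_il
(the product A_jl \<otimes> A_ij \<rightarrow> A_il); aone A i is the unit e_i of A_ii.\<close>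

record 'k zalg =
  Asp :: "int \<Rightarrow> int \<Rightarrow> 'k vec set"
  amul :: "int \<Rightarrow> int \<Rightarrow> int \<Rightarrow> 'k vec \<Rightarrow> 'k vec \<Rightarrow> 'k vec"
  aone :: "int \<Rightarrow> 'k vec"

definition is_zalg :: "('k::field) zalg \<Rightarrow> bool" where
  "is_zalg A \<longleftrightarrow>
     (\<forall>i j. is_subspace (Asp A i j) \<and> fin_dim (Asp A i j))
   \<and> (\<forall>i j. j < i \<longrightarrow> Asp A i j = {vzero})
   \<and> (\<forall>i. aone A i \<noteq> vzero \<and> Asp A i i = lspan {aone A i})
   \<and> (\<forall>i j l. bilinear_on (Asp A j l) (Asp A i j) (Asp A i l) (amul A i j l))
   \<and> (\<forall>i j l p c a b. c \<in> Asp A l p \<longrightarrow> a \<in> Asp A j l \<longrightarrow> b \<in> Asp A i j \<longrightarrow>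
         amul A i l p c (amul A i j l a b) = amul A i j p (amul A j l p c a) b)
   \<and> (\<forall>i j a. a \<in> Asp A i j \<longrightarrow>
         amul A i i j a (aone A i) = a \<and> amul A i j j (aone A j) a = a)"

text \<open>Msp M i is M_i; mact M i j m a is m a for m \<in> M_j, a \<in> A_ij, lying in M_i.\<close>

record 'k zmod =
  Msp :: "int \<Rightarrow> 'k vec set"
  mact :: "int \<Rightarrow> int \<Rightarrow> 'k vec \<Rightarrow> 'k vec \<Rightarrow> 'k vec"

definition is_module :: "('k::field) zalg \<Rightarrow> 'k zmod \<Rightarrow> bool" where
  "is_module A M \<longleftrightarrow>
     (\<forall>i. is_subspace (Msp M i))
   \<and> (\<forall>i j. bilinear_on (Msp M j) (Asp A i j) (Msp M i) (mact M i j))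
   \<and> (\<forall>i m. m \<in> Msp M i \<longrightarrow> mact M i i m (aone A i) = m)
   \<and> (\<forall>i l j m a b. m \<in> Msp M j \<longrightarrow> a \<in> Asp A l j \<longrightarrow> b \<in> Asp A i l \<longrightarrow>
         mact M i l (mact M l j m a) b = mact M i j m (amul A i l j a b))"

text \<open>Module homomorphisms (degree-preserving, A-linear); extensional: zero off the
carrier, so that Hom is a genuine set of morphisms.\<close>

definition is_hom :: "('k::field) zalg \<Rightarrow> 'k zmod \<Rightarrow> 'k zmod \<Rightarrow> (int \<Rightarrow> 'k vec \<Rightarrow> 'k vec) \<Rightarrow> bool" where
  "is_hom A M N f \<longleftrightarrow>
     (\<forall>i. linear_on (Msp M i) (Msp N i) (f i))
   \<and> (\<forall>i j m a. m \<in> Msp M j \<longrightarrow> a \<in> Asp A i j \<longrightarrow> f i (mact M i j m a) = mact N i j (f j m) a)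
   \<and> (\<forall>i v. v \<notin> Msp M i \<longrightarrow> f i v = vzero)"

definition Hom :: "('k::field) zalg \<Rightarrow> 'k zmod \<Rightarrow> 'k zmod \<Rightarrow> (int \<Rightarrow> 'k vec \<Rightarrow> 'k vec) set" where
  "Hom A M N = {f. is_hom A M N f}"

definition hcomp :: "(int \<Rightarrow> 'k vec \<Rightarrow> 'k vec) \<Rightarrow> (int \<Rightarrow> 'k vec \<Rightarrow> 'k vec) \<Rightarrow> (int \<Rightarrow> 'k vec \<Rightarrow> 'k vec)" where
  "hcomp g h = (\<lambda>i v. g i (h i v))"

definition surj_hom :: "('k::field) zalg \<Rightarrow> 'k zmod \<Rightarrow> 'k zmod \<Rightarrow> (int \<Rightarrow> 'k vec \<Rightarrow> 'k vec) \<Rightarrow> bool" where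
  "surj_hom A M N f \<longleftrightarrow> is_hom A M N f \<and> (\<forall>i. f i ` Msp M i = Msp N i)"

definition Pmod :: "('k::field) zalg \<Rightarrow> int \<Rightarrow> 'k zmod" where
  "Pmod A j = \<lparr>Msp = (\<lambda>i. Asp A i j), mact = (\<lambda>i l m a. amul A i l j m a)\<rparr>"

definition e0 :: "'k::field vec" where
  "e0 = (\<lambda>n. if n = 0 then 1 else 0)"

text \<open>S_j: k in degree j, zero elsewhere; A_jj = k e_j acts via k, all else by zero.\<close>
definition Smod :: "('k::field) zalg \<Rightarrow> int \<Rightarrow> 'k zmod" where
  "Smod A j = \<lparr>Msp = (\<lambda>i. if i = j then lspan {e0} else {vzero}),
               mact = (\<lambda>i l m a. if i = j \<and> l = j
                          then vscale (THE c. a = vscale c (aone A j)) m else vzero)\<rparr>"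

text \<open>Finite direct sum of a list of modules; the components are interleaved
coordinatewise into nat \<Rightarrow> 'k.\<close>
definition intl :: "nat \<Rightarrow> (nat \<Rightarrow> 'k::field vec) \<Rightarrow> 'k vec" where
  "intl s a = (\<lambda>n. if s = 0 then 0 else a (n mod s) (n div s))"

definition comp_of :: "nat \<Rightarrow> 'k vec \<Rightarrow> nat \<Rightarrow> 'k vec" where
  "comp_of s v t = (\<lambda>q. v (q * s + t))"

definition dsum :: "('k::field) zmod list \<Rightarrow> 'k zmod" where
  "dsum Ms = \<lparr>Msp = (\<lambda>i. {intl (length Ms) a | a. \<forall>t<length Ms. a t \<in> Msp (Ms ! t) i}),
              mact = (\<lambda>i j v b. intl (length Ms)
                        (\<lambda>t. mact (Ms ! t) i j (comp_of (length Ms) v t) b))\<rparr>"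

definition Pfam :: "('k::field) zalg \<Rightarrow> int list \<Rightarrow> 'k zmod" where
  "Pfam A js = dsum (map (Pmod A) js)"

definition ker_mod :: "'k zmod \<Rightarrow> (int \<Rightarrow> 'k vec \<Rightarrow> 'k vec) \<Rightarrow> ('k::field) zmod" where
  "ker_mod P f = \<lparr>Msp = (\<lambda>i. {v \<in> Msp P i. f i v = vzero}), mact = mact P\<rparr>"

definition fin_gen :: "('k::field) zalg \<Rightarrow> 'k zmod \<Rightarrow> bool" where
  "fin_gen A M \<longleftrightarrow> is_module A M \<and> (\<exists>js f. surj_hom A (Pfam A js) M f)"

definition coherent_mod :: "('k::field) zalg \<Rightarrow> 'k zmod \<Rightarrow> bool" where
  "coherent_mod A M \<longleftrightarrow> fin_gen A M
     \<and> (\<forall>js f. is_hom A (Pfam A js) M f \<longrightarrow> fin_gen A (ker_mod (Pfam A js) f))"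

definition coherent_zalg :: "('k::field) zalg \<Rightarrow> bool" where
  "coherent_zalg A \<longleftrightarrow> is_zalg A
     \<and> (\<forall>j. coherent_mod A (Pmod A j) \<and> coherent_mod A (Smod A j))"

text \<open>Obj describes the objects of the (full) subcategory C of A-modules; here C = coh A.
Surjections in coh A are the surjective module maps.\<close>

definition projective_seq :: "('k::field) zalg \<Rightarrow> ('k zmod \<Rightarrow> bool) \<Rightarrow> (int \<Rightarrow> 'k zmod) \<Rightarrow> bool" where
  "projective_seq A Obj E \<longleftrightarrow> (\<forall>i. Obj (E i))
     \<and> (\<forall>X Y g. Obj X \<longrightarrow> Obj Y \<longrightarrow> surj_hom A X Y g \<longrightarrow>
           (\<exists>n. \<forall>i<n. (\<lambda>h. hcomp g h) ` Hom A (E i) X = Hom A (E i) Y))"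

text \<open>Image of the map \<Oplus>_t Hom(E_{i_t},X) \<otimes> Hom(E_i,E_{i_t}) \<rightarrow> Hom(E_i,X):
all finite sums of composites f \<circ> h with f \<in> Hom(E_{i_t},X), h \<in> Hom(E_i,E_{i_t}).\<close>
definition comp_image :: "('k::field) zalg \<Rightarrow> (int \<Rightarrow> 'k zmod) \<Rightarrow> int list \<Rightarrow> 'k zmod \<Rightarrow> int
     \<Rightarrow> (int \<Rightarrow> 'k vec \<Rightarrow> 'k vec) set" where
  "comp_image A E ids X i =
     {(\<lambda>d v. vsum (\<lambda>r. hcomp (f r) (h r) d v) {..<(N::nat)}) | N c f h.
        \<forall>r<N. c r < length ids \<and> f r \<in> Hom A (E (ids ! c r)) X \<and> h r \<in> Hom A (E i) (E (ids ! c r))}"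

definition coherent_seq :: "('k::field) zalg \<Rightarrow> ('k zmod \<Rightarrow> bool) \<Rightarrow> (int \<Rightarrow> 'k zmod) \<Rightarrow> bool" where
  "coherent_seq A Obj E \<longleftrightarrow> projective_seq A Obj E
     \<and> (\<forall>X m. Obj X \<longrightarrow> (\<exists>ids. (\<forall>t\<in>set ids. t \<le> m) \<and>
           (\<exists>n. \<forall>i<n. Hom A (E i) X \<subseteq> comp_image A E ids X i)))"

end

theory Submission
  imports Defs
begin

(*
  By Yoneda, Hom(P_i, X) is X_i via f |-> f(e_i), and the composite of P_i -> P_d (given by
  c in A_id) with P_d -> X (given by y in X_d) corresponds to y c.  Hence Hom(P_i, -) is exact,
  and coherence of (P_i) amounts to: for every m, finitely many elements of X of degree <= m
  generate X in all degrees <= m.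

  For X = P_j this is shown by downward induction on m.  Coherence of S_j makes the kernel of
  the augmentation P_j -> S_j finitely generated; that kernel lives in degrees < j and contains
  (P_j)_i for all i < j.  So the generators of degree m + 1 can be traded for finitely many
  generators of degree <= m.  A coherent X is a quotient of a finite sum of P_j's, and
  generating sets compose: if y generate X and b generate each P_j, the products y b generate X.
*)

lemma vscale_0_left [simp]: "vscale 0 v = vzero"
  by (simp add: vscale_def vzero_def)

lemma vscale_vzero [simp]: "vscale c vzero = vzero"
  by (simp add: vscale_def vzero_def)

lemma vadd_vzero [simp]: "vadd vzero v = v" "vadd v vzero = v"
  by (simp_all add: vadd_def vzero_def)

lemma vadd_vscale: "vadd (vscale c e) (vscale c' e) = vscale (c + c') e"
  by (rule ext) (simp add: vadd_def vscale_def distrib_right)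

lemma vscale_vscale: "vscale c (vscale c' e) = vscale (c * c') e"
  by (rule ext) (simp add: vscale_def)

lemma vscale_right_cancel:
  assumes "e \<noteq> vzero" and "vscale c e = vscale c' e"
  shows "c = c'"
proof -
  obtain n where "e n \<noteq> 0" using assms(1) by (auto simp: vzero_def)
  moreover have "c * e n = c' * e n" using fun_cong[OF assms(2), of n] by (simp add: vscale_def)
  ultimately show "c = c'" by simp
qed

lemma lspan_singleton: "lspan {e} = range (\<lambda>c. vscale c e)"
proof
  show "lspan {e} \<subseteq> range (\<lambda>c. vscale c e)"
  proof
    fix v assume "v \<in> lspan {e}"
    then obtain c B where v: "v = vsum (\<lambda>b. vscale (c b) b) B" and "B \<subseteq> {e}"
      unfolding lspan_def by blast
    then consider "B = {}" | "B = {e}" by blast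
    then show "v \<in> range (\<lambda>c. vscale c e)"
    proof cases
      case 1
      then have "v = vscale 0 e" using v by (simp add: vsum_def vscale_def)
      then show ?thesis by blast
    next
      case 2
      then have "v = vscale (c e) e" using v by (simp add: vsum_def vscale_def)
      then show ?thesis by blast
    qed
  qed
  show "range (\<lambda>c. vscale c e) \<subseteq> lspan {e}"
  proof
    fix v assume "v \<in> range (\<lambda>c. vscale c e)"
    then obtain c where "v = vscale c e" by blast
    then show "v \<in> lspan {e}"
      unfolding lspan_def by (auto simp: vsum_def intro!: exI[of _ "\<lambda>_. c"] exI[of _ "{e}"])
  qed
qed

lemma subspace_vzero: "is_subspace S \<Longrightarrow> vzero \<in> S"
  by (simp add: is_subspace_def)

lemma subspace_vadd: "is_subspace S \<Longrightarrow> v \<in> S \<Longrightarrow> w \<in> S \<Longrightarrow> vadd v w \<in> S"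
  by (simp add: is_subspace_def)

lemma linear_on_in: "linear_on S T f \<Longrightarrow> v \<in> S \<Longrightarrow> f v \<in> T"
  by (simp add: linear_on_def)

lemma linear_on_vadd: "linear_on S T f \<Longrightarrow> v \<in> S \<Longrightarrow> w \<in> S \<Longrightarrow> f (vadd v w) = vadd (f v) (f w)"
  by (simp add: linear_on_def)

lemma linear_on_vscale: "linear_on S T f \<Longrightarrow> v \<in> S \<Longrightarrow> f (vscale c v) = vscale c (f v)"
  by (simp add: linear_on_def)

lemma linear_on_vzero: "linear_on S T f \<Longrightarrow> vzero \<in> S \<Longrightarrow> f vzero = vzero"
  by (metis linear_on_vscale vscale_0_left)

locale zalgebra =
  fixes A :: "('k::field) zalg"
  assumes zalg: "is_zalg A"
begin

lemma Asp_subspace: "is_subspace (Asp A i j)"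
  using zalg by (simp add: is_zalg_def)

lemma Asp_below_diag: "j < i \<Longrightarrow> Asp A i j = {vzero}"
  using zalg by (simp add: is_zalg_def)

lemma aone_nonzero: "aone A i \<noteq> vzero"
  using zalg by (simp add: is_zalg_def)

lemma Asp_diag: "Asp A i i = range (\<lambda>c. vscale c (aone A i))"
  using zalg by (simp add: is_zalg_def lspan_singleton)

lemma amul_bilinear: "bilinear_on (Asp A j l) (Asp A i j) (Asp A i l) (amul A i j l)"
  using zalg by (simp add: is_zalg_def)

lemma amul_assoc:
  "c \<in> Asp A l p \<Longrightarrow> a \<in> Asp A j l \<Longrightarrow> b \<in> Asp A i j \<Longrightarrow>
     amul A i l p c (amul A i j l a b) = amul A i j p (amul A j l p c a) b"
  using zalg unfolding is_zalg_def by blast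

lemma amul_aone_right: "a \<in> Asp A i j \<Longrightarrow> amul A i i j a (aone A i) = a"
  using zalg unfolding is_zalg_def by blast

lemma amul_aone_left: "a \<in> Asp A i j \<Longrightarrow> amul A i j j (aone A j) a = a"
  using zalg unfolding is_zalg_def by blast

lemma amul_linear_left: "b \<in> Asp A i j \<Longrightarrow> linear_on (Asp A j l) (Asp A i l) (\<lambda>a. amul A i j l a b)"
  using amul_bilinear[of j l i] by (simp add: bilinear_on_def)

lemma amul_linear_right: "a \<in> Asp A j l \<Longrightarrow> linear_on (Asp A i j) (Asp A i l) (amul A i j l a)"
  using amul_bilinear[of j l i] by (simp add: bilinear_on_def)

lemma amul_in: "a \<in> Asp A j l \<Longrightarrow> b \<in> Asp A i j \<Longrightarrow> amul A i j l a b \<in> Asp A i l"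
  using amul_linear_right linear_on_in by blast

lemma amul_vzero_left: "b \<in> Asp A i j \<Longrightarrow> amul A i j l vzero b = vzero"
  using linear_on_vzero[OF amul_linear_left subspace_vzero[OF Asp_subspace]] by blast

lemma amul_vzero_right: "a \<in> Asp A j l \<Longrightarrow> amul A i j l a vzero = vzero"
  using linear_on_vzero[OF amul_linear_right subspace_vzero[OF Asp_subspace]] by blast

lemma vscale_aone_in: "vscale c (aone A i) \<in> Asp A i i"
  by (simp add: Asp_diag)

lemma aone_in: "aone A i \<in> Asp A i i"
  using vscale_aone_in[of 1 i] by (simp add: vscale_def)

lemma Asp_diag_cases:
  assumes "v \<in> Asp A i i"
  obtains c where "v = vscale c (aone A i)"
  using assms by (auto simp: Asp_diag)

lemma Pmod_is_module: "is_module A (Pmod A j)"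
  unfolding is_module_def Pmod_def
  by (simp add: Asp_subspace amul_bilinear amul_aone_right amul_assoc)

end

locale zmodule = zalgebra +
  fixes M :: "('k::field) zmod"
  assumes module: "is_module A M"
begin

lemma Msp_subspace: "is_subspace (Msp M i)"
  using module by (simp add: is_module_def)

lemma mact_bilinear: "bilinear_on (Msp M j) (Asp A i j) (Msp M i) (mact M i j)"
  using module by (simp add: is_module_def)

lemma mact_assoc:
  "m \<in> Msp M j \<Longrightarrow> a \<in> Asp A l j \<Longrightarrow> b \<in> Asp A i l \<Longrightarrow>
     mact M i l (mact M l j m a) b = mact M i j m (amul A i l j a b)"
  using module unfolding is_module_def by blast

lemma mact_linear_left: "a \<in> Asp A i j \<Longrightarrow> linear_on (Msp M j) (Msp M i) (\<lambda>m. mact M i j m a)"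
  using mact_bilinear[of j i] by (simp add: bilinear_on_def)

lemma mact_linear_right: "m \<in> Msp M j \<Longrightarrow> linear_on (Asp A i j) (Msp M i) (mact M i j m)"
  using mact_bilinear[of j i] by (simp add: bilinear_on_def)

lemma mact_in: "m \<in> Msp M j \<Longrightarrow> a \<in> Asp A i j \<Longrightarrow> mact M i j m a \<in> Msp M i"
  using mact_linear_right linear_on_in by blast

lemma mact_vzero_left: "a \<in> Asp A i j \<Longrightarrow> mact M i j vzero a = vzero"
  using linear_on_vzero[OF mact_linear_left subspace_vzero[OF Msp_subspace]] by blast

lemma mact_vzero_right: "m \<in> Msp M j \<Longrightarrow> mact M i j m vzero = vzero"
  using linear_on_vzero[OF mact_linear_right subspace_vzero[OF Asp_subspace]] by blast

lemma mact_vadd_left: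
  "a \<in> Asp A i j \<Longrightarrow> m \<in> Msp M j \<Longrightarrow> m' \<in> Msp M j \<Longrightarrow>
     mact M i j (vadd m m') a = vadd (mact M i j m a) (mact M i j m' a)"
  using linear_on_vadd[OF mact_linear_left] by blast

lemma mact_vadd_right:
  "m \<in> Msp M j \<Longrightarrow> a \<in> Asp A i j \<Longrightarrow> a' \<in> Asp A i j \<Longrightarrow>
     mact M i j m (vadd a a') = vadd (mact M i j m a) (mact M i j m a')"
  using linear_on_vadd[OF mact_linear_right] by blast

end

lemma (in zalgebra) zmodule_Pmod: "zmodule A (Pmod A j)"
  by (simp add: zmodule_def zmodule_axioms_def zalgebra_axioms Pmod_is_module)

lemma Pmod_simps [simp]:
  "Msp (Pmod A j) = (\<lambda>i. Asp A i j)"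
  "mact (Pmod A j) = (\<lambda>i l m a. amul A i l j m a)"
  by (simp_all add: Pmod_def)

lemma is_hom_linear_on: "is_hom A M N f \<Longrightarrow> linear_on (Msp M i) (Msp N i) (f i)"
  by (simp add: is_hom_def)

lemma is_hom_in: "is_hom A M N f \<Longrightarrow> v \<in> Msp M i \<Longrightarrow> f i v \<in> Msp N i"
  by (simp add: is_hom_def linear_on_def)

lemma is_hom_mact:
  "is_hom A M N f \<Longrightarrow> m \<in> Msp M j \<Longrightarrow> a \<in> Asp A i j \<Longrightarrow>
     f i (mact M i j m a) = mact N i j (f j m) a"
  by (simp add: is_hom_def)

lemma is_hom_outside: "is_hom A M N f \<Longrightarrow> v \<notin> Msp M i \<Longrightarrow> f i v = vzero"
  by (simp add: is_hom_def)

lemma is_hom_vzero: "is_hom A M N f \<Longrightarrow> f i vzero = vzero"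
  using linear_on_vzero[OF is_hom_linear_on] is_hom_outside by metis

lemma hcomp_is_hom:
  assumes "is_hom A M N g" and "is_hom A L M h"
  shows "is_hom A L N (hcomp g h)"
  unfolding is_hom_def
proof (intro conjI allI impI)
  show "linear_on (Msp L i) (Msp N i) (hcomp g h i)" for i
    using is_hom_linear_on[OF assms(1), of i] is_hom_linear_on[OF assms(2), of i]
    unfolding linear_on_def hcomp_def by auto
  show "hcomp g h i (mact L i j m a) = mact N i j (hcomp g h j m) a"
    if "m \<in> Msp L j" "a \<in> Asp A i j" for i j m a
    using that is_hom_mact[OF assms(2)] is_hom_mact[OF assms(1)] is_hom_in[OF assms(2)]
    by (simp add: hcomp_def)
  show "hcomp g h i v = vzero" if "v \<notin> Msp L i" for i v
    using that is_hom_outside[OF assms(2)] is_hom_vzero[OF assms(1)] by (simp add: hcomp_def)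
qed

definition yoneda :: "('k::field) zalg \<Rightarrow> 'k zmod \<Rightarrow> int \<Rightarrow> 'k vec \<Rightarrow> (int \<Rightarrow> 'k vec \<Rightarrow> 'k vec)" where
  "yoneda A M j x = (\<lambda>d v. if v \<in> Asp A d j then mact M d j x v else vzero)"

context zmodule
begin

lemma yoneda_in_Hom:
  assumes x: "x \<in> Msp M j"
  shows "yoneda A M j x \<in> Hom A (Pmod A j) M"
proof -
  have lin: "linear_on (Asp A d j) (Msp M d) (yoneda A M j x d)" for d
    using mact_linear_right[OF x, of d] subspace_vadd[OF Asp_subspace] Asp_subspace
    unfolding linear_on_def yoneda_def is_subspace_def by auto
  have comp: "yoneda A M j x d (amul A d l j m a) = mact M d l (yoneda A M j x l m) a"
    if "m \<in> Asp A l j" and "a \<in> Asp A d l" for d l m a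
    using that amul_in mact_assoc[OF x] by (simp add: yoneda_def)
  show ?thesis unfolding Hom_def is_hom_def using lin comp by (simp add: yoneda_def)
qed

lemma Hom_Pmod_eq_yoneda:
  assumes f: "f \<in> Hom A (Pmod A j) M"
  shows "f = yoneda A M j (f j (aone A j))"
proof (rule ext, rule ext)
  fix d v
  have h: "is_hom A (Pmod A j) M f" using f by (simp add: Hom_def)
  show "f d v = yoneda A M j (f j (aone A j)) d v"
  proof (cases "v \<in> Asp A d j")
    case True
    have "f d v = f d (mact (Pmod A j) d j (aone A j) v)"
      using amul_aone_left[OF True] by simp
    also have "\<dots> = mact M d j (f j (aone A j)) v"
      using is_hom_mact[OF h _ True] aone_in by simp
    finally show ?thesis using True by (simp add: yoneda_def)
  qed (simp add: yoneda_def is_hom_outside[OF h])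
qed

lemma Hom_Pmod_aone_in: "f \<in> Hom A (Pmod A j) M \<Longrightarrow> f j (aone A j) \<in> Msp M j"
  using is_hom_in aone_in by (fastforce simp: Hom_def)

lemma yoneda_vzero: "yoneda A M j vzero = (\<lambda>d v. vzero)"
  by (auto simp: yoneda_def mact_vzero_left intro!: ext)

lemma yoneda_vadd:
  "x \<in> Msp M j \<Longrightarrow> y \<in> Msp M j \<Longrightarrow>
     yoneda A M j (vadd x y) = (\<lambda>d v. vadd (yoneda A M j x d v) (yoneda A M j y d v))"
  by (auto simp: yoneda_def mact_vadd_left intro!: ext)

lemma yoneda_mact:
  assumes "y \<in> Msp M d" and "c \<in> Asp A i d"
  shows "yoneda A M i (mact M i d y c) = hcomp (yoneda A M d y) (yoneda A (Pmod A d) i c)"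
proof (rule ext, rule ext)
  fix k v
  show "yoneda A M i (mact M i d y c) k v = hcomp (yoneda A M d y) (yoneda A (Pmod A d) i c) k v"
  proof (cases "v \<in> Asp A k i")
    case True
    then show ?thesis using assms amul_in mact_assoc by (simp add: yoneda_def hcomp_def)
  next
    case False
    then show ?thesis using assms(1) mact_vzero_right subspace_vzero[OF Asp_subspace]
      by (simp add: yoneda_def hcomp_def)
  qed
qed

end

lemma (in zalgebra) hcomp_image_Hom_Pmod:
  assumes X: "is_module A X" and Y: "is_module A Y" and g: "surj_hom A X Y g"
  shows "(\<lambda>h. hcomp g h) ` Hom A (Pmod A i) X = Hom A (Pmod A i) Y"
proof -
  interpret X: zmodule A X using X by unfold_locales
  interpret Y: zmodule A Y using Y by unfold_locales
  have gh: "is_hom A X Y g" using g by (simp add: surj_hom_def)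
  show ?thesis
  proof
    show "(\<lambda>h. hcomp g h) ` Hom A (Pmod A i) X \<subseteq> Hom A (Pmod A i) Y"
    proof (rule image_subsetI)
      fix h assume "h \<in> Hom A (Pmod A i) X"
      then show "hcomp g h \<in> Hom A (Pmod A i) Y" using hcomp_is_hom[OF gh] by (simp add: Hom_def)
    qed
    show "Hom A (Pmod A i) Y \<subseteq> (\<lambda>h. hcomp g h) ` Hom A (Pmod A i) X"
    proof
      fix \<psi> assume \<psi>: "\<psi> \<in> Hom A (Pmod A i) Y"
      then have "\<psi> i (aone A i) \<in> g i ` Msp X i"
        using g Y.Hom_Pmod_aone_in by (simp add: surj_hom_def)
      then obtain x where x: "x \<in> Msp X i" "g i x = \<psi> i (aone A i)" by auto
      have "hcomp g (yoneda A X i x) = yoneda A Y i (\<psi> i (aone A i))"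
      proof (rule ext, rule ext)
        fix d v
        show "hcomp g (yoneda A X i x) d v = yoneda A Y i (\<psi> i (aone A i)) d v"
          using is_hom_mact[OF gh x(1)] x(2) is_hom_vzero[OF gh] by (simp add: hcomp_def yoneda_def)
      qed
      then have "\<psi> = hcomp g (yoneda A X i x)"
        using Y.Hom_Pmod_eq_yoneda[OF \<psi>] by (rule trans[OF _ sym, symmetric])
      then show "\<psi> \<in> (\<lambda>h. hcomp g h) ` Hom A (Pmod A i) X"
        using X.yoneda_in_Hom[OF x(1)] by (rule image_eqI)
    qed
  qed
qed

lemma (in zalgebra) projective_seq_Pmod:
  assumes "\<And>i. Obj (Pmod A i)" and "\<And>X. Obj X \<Longrightarrow> is_module A X"
  shows "projective_seq A Obj (Pmod A)"
  unfolding projective_seq_def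
proof (intro conjI allI impI)
  fix X Y g assume "Obj X" "Obj Y" "surj_hom A X Y g"
  then show "\<exists>n. \<forall>i<n. (\<lambda>h. hcomp g h) ` Hom A (Pmod A i) X = Hom A (Pmod A i) Y"
    using assms(2) hcomp_image_Hom_Pmod[of X Y g] by simp
qed (fact assms(1))

(* The degree-i part of the submodule of M generated by G.  Since each A_id is a subspace,
   no separate closure under scalars is needed. *)

inductive_set gen_submod :: "('k::field) zalg \<Rightarrow> 'k zmod \<Rightarrow> (int \<times> 'k vec) set \<Rightarrow> int \<Rightarrow> 'k vec set"
  for A M G i where
  zero: "vzero \<in> gen_submod A M G i"
| gen: "(d, y) \<in> G \<Longrightarrow> c \<in> Asp A i d \<Longrightarrow> mact M i d y c \<in> gen_submod A M G i"
| add: "x \<in> gen_submod A M G i \<Longrightarrow> x' \<in> gen_submod A M G i \<Longrightarrow> vadd x x' \<in> gen_submod A M G i"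

lemma gen_submod_mact_cong:
  assumes "mact M = mact N"
  shows "x \<in> gen_submod A M G i \<Longrightarrow> x \<in> gen_submod A N G i"
  by (induction x rule: gen_submod.induct) (auto simp: assms intro: gen_submod.intros)

context zmodule
begin

lemma gen_submod_subset:
  assumes "\<forall>(d, y)\<in>G. y \<in> Msp M d"
  shows "gen_submod A M G i \<subseteq> Msp M i"
proof
  show "x \<in> gen_submod A M G i \<Longrightarrow> x \<in> Msp M i" for x
    by (induction x rule: gen_submod.induct)
      (use assms mact_in subspace_vzero[OF Msp_subspace] subspace_vadd[OF Msp_subspace] in auto)
qed

lemma gen_submod_nonzero_gens:
  "x \<in> gen_submod A M G i \<Longrightarrow> x \<in> gen_submod A M {p \<in> G. snd p \<noteq> vzero} i"
proof (induction x rule: gen_submod.induct)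
  case (gen d y c)
  then show ?case
    by (cases "y = vzero") (auto simp: mact_vzero_left intro: gen_submod.intros)
qed (auto intro: gen_submod.intros)

end

lemma (in zalgebra) Asp_subset_gen_submod_aone: "Asp A i j \<subseteq> gen_submod A (Pmod A j) {(j, aone A j)} i"
proof
  fix a assume a: "a \<in> Asp A i j"
  have "mact (Pmod A j) i j (aone A j) a \<in> gen_submod A (Pmod A j) {(j, aone A j)} i"
    using a by (rule gen_submod.gen[OF singletonI])
  then show "a \<in> gen_submod A (Pmod A j) {(j, aone A j)} i"
    using amul_aone_left[OF a] by simp
qed

definition gens_comp :: "'k zmod \<Rightarrow> (int \<times> 'k vec) set \<Rightarrow> (int \<Rightarrow> (int \<times> 'k vec) set)
    \<Rightarrow> (int \<times> 'k vec) set" where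
  "gens_comp M G H = {(d, mact M d j y b) | d b j y. (j, y) \<in> G \<and> (d, b) \<in> H j}"

lemma finite_gens_comp:
  assumes "finite G" and "\<forall>(j, y)\<in>G. finite (H j)"
  shows "finite (gens_comp M G H)"
proof -
  have "gens_comp M G H \<subseteq> (\<lambda>((j, y), (d, b)). (d, mact M d j y b)) ` (SIGMA p:G. H (fst p))"
    unfolding gens_comp_def by force
  moreover have "finite (SIGMA p:G. H (fst p))"
    by (rule finite_SigmaI) (use assms in auto)
  ultimately show ?thesis by (meson finite_imageI finite_subset)
qed

lemma (in zmodule) gen_submod_gens_comp:
  assumes G: "\<forall>(j, y)\<in>G. y \<in> Msp M j"
    and H: "\<forall>(j, y)\<in>G. \<forall>(d, b)\<in>H j. b \<in> Asp A d j"
    and HG: "\<forall>(j, y)\<in>G. Asp A i j \<subseteq> gen_submod A (Pmod A j) (H j) i"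
  shows "x \<in> gen_submod A M G i \<Longrightarrow> x \<in> gen_submod A M (gens_comp M G H) i"
proof (induction x rule: gen_submod.induct)
  case (gen j y c)
  have y: "y \<in> Msp M j" using G gen(1) by blast
  interpret P: zmodule A "Pmod A j" by (rule zmodule_Pmod)
  have "c \<in> gen_submod A (Pmod A j) (H j) i" using HG gen by blast
  then show ?case
  proof (induction c rule: gen_submod.induct)
    case zero
    then show ?case using mact_vzero_right[OF y] by (simp add: gen_submod.zero)
  next
    case (gen d b c')
    have b: "b \<in> Asp A d j" using H gen.hyps(1) \<open>(j, y) \<in> G\<close> by blast
    have "(d, mact M d j y b) \<in> gens_comp M G H"
      unfolding gens_comp_def using gen.hyps(1) \<open>(j, y) \<in> G\<close> by blast
    then have "mact M i d (mact M d j y b) c' \<in> gen_submod A M (gens_comp M G H) i"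
      using gen.hyps(2) by (rule gen_submod.gen)
    then show ?case using mact_assoc[OF y b gen.hyps(2)] by simp
  next
    case (add c1 c2)
    have "\<forall>(d, b)\<in>H j. b \<in> Asp A d j" using H \<open>(j, y) \<in> G\<close> by blast
    then have "c1 \<in> Asp A i j" "c2 \<in> Asp A i j"
      using P.gen_submod_subset[of "H j" i] add.hyps by auto
    then show ?case using mact_vadd_right[OF y] gen_submod.add[OF add.IH] by simp
  qed
qed (auto intro: gen_submod.intros)

lemma comp_imageI:
  fixes N :: nat
  assumes "\<forall>r<N. c r < length ids \<and> f r \<in> Hom A (E (ids ! c r)) X \<and> h r \<in> Hom A (E i) (E (ids ! c r))"
  shows "(\<lambda>d v. vsum (\<lambda>r. hcomp (f r) (h r) d v) {..<N}) \<in> comp_image A E ids X i"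
  unfolding comp_image_def using assms by blast

lemma comp_image_zero: "(\<lambda>d v. vzero) \<in> comp_image A E ids X i"
proof -
  have "(\<lambda>d v. vzero) = (\<lambda>d v. vsum (\<lambda>r. hcomp undefined undefined d v) {..<0::nat})"
    by (simp add: vsum_def vzero_def)
  also have "\<dots> \<in> comp_image A E ids X i" by (rule comp_imageI) simp
  finally show ?thesis .
qed

lemma comp_image_hcomp:
  assumes "k < length ids" "f \<in> Hom A (E (ids ! k)) X" "h \<in> Hom A (E i) (E (ids ! k))"
  shows "hcomp f h \<in> comp_image A E ids X i"
proof -
  have "hcomp f h = (\<lambda>d v. vsum (\<lambda>r. hcomp ((\<lambda>_. f) r) ((\<lambda>_. h) r) d v) {..<1::nat})"
    by (simp add: vsum_def)
  also have "\<dots> \<in> comp_image A E ids X i"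
    by (rule comp_imageI[where c = "\<lambda>_. k"]) (simp add: assms)
  finally show ?thesis .
qed

lemma comp_image_add:
  assumes "F1 \<in> comp_image A E ids X i" "F2 \<in> comp_image A E ids X i"
  shows "(\<lambda>d v. vadd (F1 d v) (F2 d v)) \<in> comp_image A E ids X i"
proof -
  let ?ok = "\<lambda>c f h r. c r < length ids \<and> f r \<in> Hom A (E (ids ! c r)) X \<and> h r \<in> Hom A (E i) (E (ids ! c r))"
  obtain N1 c1 f1 h1 where F1: "F1 = (\<lambda>d v. vsum (\<lambda>r. hcomp (f1 r) (h1 r) d v) {..<N1::nat})"
    and ok1: "\<forall>r<N1. ?ok c1 f1 h1 r"
    using assms(1) unfolding comp_image_def by blast
  obtain N2 c2 f2 h2 where F2: "F2 = (\<lambda>d v. vsum (\<lambda>r. hcomp (f2 r) (h2 r) d v) {..<N2::nat})"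
    and ok2: "\<forall>r<N2. ?ok c2 f2 h2 r"
    using assms(2) unfolding comp_image_def by blast
  define c where "c r = (if r < N1 then c1 r else c2 (r - N1))" for r
  define f where "f r = (if r < N1 then f1 r else f2 (r - N1))" for r
  define h where "h r = (if r < N1 then h1 r else h2 (r - N1))" for r
  have "\<forall>r<N1 + N2. ?ok c f h r"
    using ok1 ok2 by (auto simp: c_def f_def h_def)
  moreover have "(\<lambda>d v. vadd (F1 d v) (F2 d v)) = (\<lambda>d v. vsum (\<lambda>r. hcomp (f r) (h r) d v) {..<N1 + N2})"
  proof (intro ext)
    fix d v n
    have split: "sum g {..<N1 + N2} = sum g {..<N1} + sum (\<lambda>r. g (N1 + r)) {..<N2}" for g :: "nat \<Rightarrow> 'a"
      by (induction N2) (simp_all add: add.assoc)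
    show "vadd (F1 d v) (F2 d v) n = vsum (\<lambda>r. hcomp (f r) (h r) d v) {..<N1 + N2} n"
      unfolding F1 F2 vadd_def vsum_def split by (simp add: f_def h_def)
  qed
  ultimately show ?thesis by (simp add: comp_imageI)
qed

lemma (in zmodule) yoneda_in_comp_image:
  assumes L: "\<forall>(d, y)\<in>set L. y \<in> Msp M d"
  shows "x \<in> gen_submod A M (set L) i \<Longrightarrow> yoneda A M i x \<in> comp_image A (Pmod A) (map fst L) M i"
proof (induction x rule: gen_submod.induct)
  case zero
  show ?case unfolding yoneda_vzero by (rule comp_image_zero)
next
  case (gen d y c)
  obtain k where k: "k < length L" "L ! k = (d, y)" using gen(1) by (auto simp: in_set_conv_nth)
  have y: "y \<in> Msp M d" using L gen(1) by blast
  interpret P: zmodule A "Pmod A d" by (rule zmodule_Pmod)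
  have "hcomp (yoneda A M d y) (yoneda A (Pmod A d) i c) \<in> comp_image A (Pmod A) (map fst L) M i"
    using k yoneda_in_Hom[OF y] P.yoneda_in_Hom[of c i] gen(2)
    by (intro comp_image_hcomp[where k = k]) simp_all
  then show ?case unfolding yoneda_mact[OF y gen(2)] .
next
  case (add x x')
  have "x \<in> Msp M i" "x' \<in> Msp M i" using gen_submod_subset[OF L] add.hyps by blast+
  then show ?case using comp_image_add[OF add.IH] by (simp add: yoneda_vadd)
qed

lemma intl_cong: "(\<And>t. t < s \<Longrightarrow> a t = b t) \<Longrightarrow> intl s a = intl s b"
  by (rule ext) (simp add: intl_def)

lemma comp_of_intl: "t < s \<Longrightarrow> comp_of s (intl s u) t = u t"
  by (rule ext) (simp add: comp_of_def intl_def)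

lemma intl_vadd: "intl s (\<lambda>t. vadd (a t) (b t)) = vadd (intl s a) (intl s b)"
  by (rule ext) (simp add: intl_def vadd_def)

lemma intl_vzero: "intl s (\<lambda>t. vzero) = vzero"
  by (rule ext) (simp add: intl_def vzero_def)

lemma Msp_Pfam: "Msp (Pfam A js) i = {intl (length js) a | a. \<forall>t<length js. a t \<in> Asp A i (js ! t)}"
  by (simp add: Pfam_def dsum_def)

lemma intl_in_Msp_Pfam:
  "(\<And>t. t < length js \<Longrightarrow> a t \<in> Asp A i (js ! t)) \<Longrightarrow> intl (length js) a \<in> Msp (Pfam A js) i"
  unfolding Msp_Pfam by blast

lemma mact_Pfam:
  "mact (Pfam A js) i l v b = intl (length js) (\<lambda>t. amul A i l (js ! t) (comp_of (length js) v t) b)"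
  unfolding Pfam_def dsum_def by (simp, rule intl_cong, simp)

lemma Pfam_singleton: "Pfam A [j] = Pmod A j"
proof -
  have intl1: "intl (Suc 0) a = a 0" for a :: "nat \<Rightarrow> 'a vec"
    by (rule ext) (simp add: intl_def)
  have comp_of1: "comp_of (Suc 0) v 0 = v" for v :: "'a vec"
    by (rule ext) (simp add: comp_of_def)
  have "(\<lambda>i. {a 0 | a. a 0 \<in> Asp A i j}) = (\<lambda>i. Asp A i j)"
    by (intro ext) (auto intro: exI[of _ "\<lambda>_. _"])
  then show ?thesis by (simp add: Pfam_def dsum_def Pmod_def intl1 comp_of1)
qed

definition Pfam_unit :: "('k::field) zalg \<Rightarrow> int list \<Rightarrow> nat \<Rightarrow> 'k vec" where
  "Pfam_unit A js t = intl (length js) (\<lambda>t'. if t' = t then aone A (js ! t) else vzero)"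

context zalgebra
begin

lemma Pfam_unit_in: "t < length js \<Longrightarrow> Pfam_unit A js t \<in> Msp (Pfam A js) (js ! t)"
  unfolding Pfam_unit_def
  by (rule intl_in_Msp_Pfam) (auto simp: aone_in subspace_vzero[OF Asp_subspace])

lemma mact_Pfam_unit:
  assumes "t0 < length js" and b: "b \<in> Asp A i (js ! t0)"
  shows "mact (Pfam A js) i (js ! t0) (Pfam_unit A js t0) b = intl (length js) (\<lambda>t. if t = t0 then b else vzero)"
  unfolding mact_Pfam Pfam_unit_def
  by (rule intl_cong) (simp add: comp_of_intl amul_aone_left[OF b] amul_vzero_left[OF b])

end

lemma (in zmodule) gen_submod_Pfam_units:
  assumes g: "surj_hom A (Pfam A js) M g" and x: "x \<in> Msp M i"
  shows "x \<in> gen_submod A M ((\<lambda>t. (js ! t, g (js ! t) (Pfam_unit A js t))) ` {..<length js}) i"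
proof -
  let ?s = "length js" and ?G = "(\<lambda>t. (js ! t, g (js ! t) (Pfam_unit A js t))) ` {..<length js}"
  have gh: "is_hom A (Pfam A js) M g" using g by (simp add: surj_hom_def)
  obtain v where v: "v \<in> Msp (Pfam A js) i" "x = g i v" using g x by (auto simp: surj_hom_def)
  then obtain a where a: "v = intl ?s a" "\<And>t. t < ?s \<Longrightarrow> a t \<in> Asp A i (js ! t)"
    unfolding Msp_Pfam by blast
  define w where "w T = intl ?s (\<lambda>t. if t \<in> T then a t else vzero)" for T
  have w_in: "w T \<in> Msp (Pfam A js) i" for T
    unfolding w_def by (rule intl_in_Msp_Pfam) (auto simp: a(2) subspace_vzero[OF Asp_subspace])
  have w_gen: "finite T \<Longrightarrow> T \<subseteq> {..<?s} \<Longrightarrow> g i (w T) \<in> gen_submod A M ?G i" for T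
  proof (induction T rule: finite_induct)
    case empty
    have "w {} = vzero" unfolding w_def by (simp add: intl_vzero)
    then show ?case using is_hom_vzero[OF gh] by (simp add: gen_submod.zero)
  next
    case (insert t0 T)
    have t0: "t0 < ?s" using insert by auto
    define u where "u = intl ?s (\<lambda>t. if t = t0 then a t0 else vzero)"
    have u_in: "u \<in> Msp (Pfam A js) i"
      unfolding u_def by (rule intl_in_Msp_Pfam) (auto simp: a(2) t0 subspace_vzero[OF Asp_subspace])
    have w_insert: "w (insert t0 T) = vadd (w T) u"
      unfolding w_def u_def intl_vadd[symmetric] by (rule intl_cong) (use insert in auto)
    have "g i u = mact M i (js ! t0) (g (js ! t0) (Pfam_unit A js t0)) (a t0)"
      using is_hom_mact[OF gh Pfam_unit_in[OF t0] a(2)[OF t0]] mact_Pfam_unit[OF t0 a(2)[OF t0]]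
      by (simp add: u_def)
    also have "\<dots> \<in> gen_submod A M ?G i"
      by (rule gen_submod.gen) (use t0 a(2)[OF t0] in auto)
    finally have "vadd (g i (w T)) (g i u) \<in> gen_submod A M ?G i"
      using insert by (auto intro: gen_submod.add)
    then show ?case
      unfolding w_insert using linear_on_vadd[OF is_hom_linear_on[OF gh] w_in u_in] by simp
  qed
  have "w {..<?s} = v" unfolding w_def a(1) by (rule intl_cong) simp
  then show ?thesis using w_gen[of "{..<?s}"] v by simp
qed

lemma (in zalgebra) fin_gen_finite_gens:
  assumes "fin_gen A M"
  obtains G where "finite G" "\<forall>(d, y)\<in>G. y \<in> Msp M d" "\<And>i. Msp M i \<subseteq> gen_submod A M G i"
proof -
  interpret zmodule A M using assms by unfold_locales (simp add: fin_gen_def)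
  obtain js g where g: "surj_hom A (Pfam A js) M g" using assms by (auto simp: fin_gen_def)
  let ?G = "(\<lambda>t. (js ! t, g (js ! t) (Pfam_unit A js t))) ` {..<length js}"
  have "\<forall>(d, y)\<in>?G. y \<in> Msp M d"
    using g Pfam_unit_in is_hom_in by (fastforce simp: surj_hom_def)
  then show ?thesis using that[of ?G] gen_submod_Pfam_units[OF g] by blast
qed

definition augmentation :: "('k::field) zalg \<Rightarrow> int \<Rightarrow> int \<Rightarrow> 'k vec \<Rightarrow> 'k vec" where
  "augmentation A j = (\<lambda>d v. if d = j \<and> v \<in> Asp A j j
      then vscale (THE c. v = vscale c (aone A j)) e0 else vzero)"

context zalgebra
begin

lemma the_vscale_aone [simp]: "(THE c'. vscale c (aone A j) = vscale c' (aone A j)) = c"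
  by (rule the_equality) (auto dest: vscale_right_cancel[OF aone_nonzero])

lemma augmentation_vscale: "augmentation A j j (vscale c (aone A j)) = vscale c e0"
  by (simp add: augmentation_def vscale_aone_in)

lemma augmentation_vzero: "augmentation A j d vzero = vzero"
  using the_vscale_aone[of 0 j] by (simp add: augmentation_def)

lemma augmentation_linear: "linear_on (Asp A i j) (Msp (Smod A j) i) (augmentation A j i)"
proof (cases "i = j")
  case True
  have "linear_on (Asp A j j) (range (\<lambda>c. vscale c e0)) (augmentation A j j)"
    unfolding linear_on_def Asp_diag
    by (auto simp: augmentation_vscale vadd_vscale vscale_vscale)
  then show ?thesis using True by (simp add: Smod_def lspan_singleton)
qed (simp add: Smod_def linear_on_def augmentation_def)

lemma augmentation_amul:
  assumes m: "m \<in> Asp A l j" and a: "a \<in> Asp A d l"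
  shows "augmentation A j d (amul A d l j m a) = mact (Smod A j) d l (augmentation A j l m) a"
proof -
  consider "d \<noteq> j" | "d = j" "l = j" | "d = j" "l < j" | "d = j" "j < l" by linarith
  then show ?thesis
  proof cases
    case 1
    then show ?thesis by (simp add: augmentation_def Smod_def)
  next
    case 2
    obtain c where c: "m = vscale c (aone A j)" using m 2 Asp_diag_cases by blast
    obtain c' where c': "a = vscale c' (aone A j)" using a 2 Asp_diag_cases by blast
    have "amul A j j j m a = vscale c (amul A j j j (aone A j) a)"
      unfolding c using linear_on_vscale[OF amul_linear_left aone_in] a 2 by blast
    also have "\<dots> = vscale (c * c') (aone A j)"
      using amul_aone_left a 2 c' by (simp add: vscale_vscale)
    finally show ?thesis
      using 2 c c' by (simp add: augmentation_vscale Smod_def vscale_vscale mult.commute)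
  next
    case 3
    then have "a = vzero" using Asp_below_diag[of l d] a by auto
    then show ?thesis using 3 amul_vzero_right[OF m] by (simp add: augmentation_vzero Smod_def)
  next
    case 4
    then have "m = vzero" using Asp_below_diag[of j l] m by auto
    then show ?thesis using 4 amul_vzero_left[OF a] by (simp add: augmentation_vzero Smod_def)
  qed
qed

lemma augmentation_is_hom: "is_hom A (Pmod A j) (Smod A j) (augmentation A j)"
  unfolding is_hom_def using augmentation_linear augmentation_amul
  by (auto simp: augmentation_def)

lemma ker_augmentation_degree:
  assumes "y \<in> Msp (ker_mod (Pmod A j) (augmentation A j)) d" and "y \<noteq> vzero"
  shows "d < j"
proof (rule ccontr)
  assume "\<not> d < j"
  then consider "j < d" | "d = j" by linarith
  then show False
  proof cases
    case 1
    then show False using Asp_below_diag[of j d] assms by (auto simp: ker_mod_def)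
  next
    case 2
    then have y: "y \<in> Asp A j j" "augmentation A j j y = vzero"
      using assms(1) by (simp_all add: ker_mod_def)
    obtain c where c: "y = vscale c (aone A j)" using Asp_diag_cases[OF y(1)] .
    then have "vscale c e0 0 = vzero 0" using y(2) by (simp add: augmentation_vscale)
    then have "c = 0" by (simp add: vscale_def e0_def vzero_def)
    then show False using c assms(2) by simp
  qed
qed

end

definition gens_below :: "('k::field) zalg \<Rightarrow> 'k zmod \<Rightarrow> int \<Rightarrow> (int \<times> 'k vec) set \<Rightarrow> bool" where
  "gens_below A M m G \<longleftrightarrow> finite G \<and> (\<forall>(d, y)\<in>G. d \<le> m \<and> y \<in> Msp M d)
     \<and> (\<forall>i\<le>m. Msp M i \<subseteq> gen_submod A M G i)"

lemma (in zmodule) gens_below_gens_comp: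
  assumes "finite G" and G: "\<forall>(j, y)\<in>G. y \<in> Msp M j"
    and "\<forall>i\<le>m. Msp M i \<subseteq> gen_submod A M G i"
    and H: "\<forall>(j, y)\<in>G. gens_below A (Pmod A j) m (H j)"
  shows "gens_below A M m (gens_comp M G H)"
  unfolding gens_below_def
proof (intro conjI)
  show "finite (gens_comp M G H)"
    using assms(1) H by (intro finite_gens_comp) (auto simp: gens_below_def)
  show "\<forall>(d, z)\<in>gens_comp M G H. d \<le> m \<and> z \<in> Msp M d"
    using G H mact_in by (fastforce simp: gens_comp_def gens_below_def)
  show "\<forall>i\<le>m. Msp M i \<subseteq> gen_submod A M (gens_comp M G H) i"
  proof (intro allI impI subsetI)
    fix i x assume "i \<le> m" and "x \<in> Msp M i"
    then have "x \<in> gen_submod A M G i" using assms(3) by blast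
    then show "x \<in> gen_submod A M (gens_comp M G H) i"
      using G H \<open>i \<le> m\<close> by (intro gen_submod_gens_comp) (fastforce simp: gens_below_def)+
  qed
qed

context zalgebra
begin

lemma gens_below_aone: "j \<le> m \<Longrightarrow> gens_below A (Pmod A j) m {(j, aone A j)}"
  using Asp_subset_gen_submod_aone aone_in by (simp add: gens_below_def)

lemma Pmod_gens_strictly_below:
  assumes "coherent_zalg A"
  obtains H where "gens_below A (Pmod A j) (j - 1) H"
proof -
  let ?K = "ker_mod (Pmod A j) (augmentation A j)"
  have "is_hom A (Pfam A [j]) (Smod A j) (augmentation A j)"
    by (simp add: Pfam_singleton augmentation_is_hom)
  then have "fin_gen A (ker_mod (Pfam A [j]) (augmentation A j))"
    using assms by (simp add: coherent_zalg_def coherent_mod_def)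
  then obtain G where G: "finite G" "\<forall>(d, y)\<in>G. y \<in> Msp ?K d" "\<And>i. Msp ?K i \<subseteq> gen_submod A ?K G i"
    using fin_gen_finite_gens unfolding Pfam_singleton by metis
  interpret P: zmodule A "Pmod A j" by (rule zmodule_Pmod)
  have "gens_below A (Pmod A j) (j - 1) {p \<in> G. snd p \<noteq> vzero}"
    unfolding gens_below_def
  proof (intro conjI)
    show "finite {p \<in> G. snd p \<noteq> vzero}" using G(1) by simp
    show "\<forall>(d, y)\<in>{p \<in> G. snd p \<noteq> vzero}. d \<le> j - 1 \<and> y \<in> Msp (Pmod A j) d"
      using G(2) ker_augmentation_degree by (fastforce simp: ker_mod_def)
    show "\<forall>i\<le>j - 1. Msp (Pmod A j) i \<subseteq> gen_submod A (Pmod A j) {p \<in> G. snd p \<noteq> vzero} i"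
    proof (intro allI impI subsetI)
      fix i a assume "i \<le> j - 1" and a: "a \<in> Msp (Pmod A j) i"
      then have "a \<in> Msp ?K i" by (simp add: ker_mod_def augmentation_def)
      then have "a \<in> gen_submod A ?K G i" using G(3) by blast
      then have "a \<in> gen_submod A (Pmod A j) G i"
        by (rule gen_submod_mact_cong[rotated]) (simp add: ker_mod_def)
      then show "a \<in> gen_submod A (Pmod A j) {p \<in> G. snd p \<noteq> vzero} i"
        by (rule P.gen_submod_nonzero_gens)
    qed
  qed
  then show ?thesis by (rule that)
qed

lemma Pmod_gens_below:
  assumes "coherent_zalg A"
  obtains H where "gens_below A (Pmod A j) m H"
proof -
  have "\<exists>H. gens_below A (Pmod A j) m H" if "m \<le> j" for m
    using that
  proof (induction m rule: int_le_induct)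
    case base
    show ?case using gens_below_aone by blast
  next
    case (step m)
    then obtain H where H: "gens_below A (Pmod A j) m H" by blast
    obtain H' where H': "gens_below A (Pmod A m) (m - 1) H'" using Pmod_gens_strictly_below[OF assms] .
    define Hd where "Hd d = (if d = m then H' else {(d, aone A d)})" for d
    interpret P: zmodule A "Pmod A j" by (rule zmodule_Pmod)
    have "gens_below A (Pmod A j) (m - 1) (gens_comp (Pmod A j) H Hd)"
    proof (rule P.gens_below_gens_comp)
      show "\<forall>(d, b)\<in>H. gens_below A (Pmod A d) (m - 1) (Hd d)"
      proof clarify
        fix d b assume "(d, b) \<in> H"
        then have "d \<le> m" using H by (auto simp: gens_below_def)
        then show "gens_below A (Pmod A d) (m - 1) (Hd d)"
          using H' gens_below_aone[of d "m - 1"] by (cases "d = m") (simp_all add: Hd_def)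
      qed
    qed (use H in \<open>auto simp: gens_below_def\<close>)
    then show ?case by blast
  qed
  moreover have "gens_below A (Pmod A j) m {(j, aone A j)}" if "j \<le> m"
    using that by (rule gens_below_aone)
  ultimately show ?thesis using that by (metis linear)
qed

lemma fin_gen_gens_below:
  assumes "coherent_zalg A" and "fin_gen A M"
  obtains T where "gens_below A M m T"
proof -
  interpret zmodule A M using assms(2) by unfold_locales (simp add: fin_gen_def)
  obtain G where G: "finite G" "\<forall>(d, y)\<in>G. y \<in> Msp M d" "\<And>i. Msp M i \<subseteq> gen_submod A M G i"
    using fin_gen_finite_gens[OF assms(2)] by blast
  define H where "H j = (SOME H. gens_below A (Pmod A j) m H)" for j
  have "gens_below A (Pmod A j) m (H j)" for j
    unfolding H_def using Pmod_gens_below[OF assms(1)] by (metis someI)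
  then have "gens_below A M m (gens_comp M G H)"
    using G by (intro gens_below_gens_comp) auto
  then show ?thesis by (rule that)
qed

lemma Hom_Pmod_subset_comp_image:
  assumes "coherent_zalg A" and "fin_gen A X"
  obtains ids where "\<forall>t\<in>set ids. t \<le> m" "\<forall>i\<le>m. Hom A (Pmod A i) X \<subseteq> comp_image A (Pmod A) ids X i"
proof -
  interpret zmodule A X using assms(2) by unfold_locales (simp add: fin_gen_def)
  obtain T where T: "gens_below A X m T" using fin_gen_gens_below[OF assms] .
  obtain L where L: "set L = T" using T finite_list by (metis gens_below_def)
  have "Hom A (Pmod A i) X \<subseteq> comp_image A (Pmod A) (map fst L) X i" if "i \<le> m" for i
  proof
    fix \<phi> assume \<phi>: "\<phi> \<in> Hom A (Pmod A i) X"
    have "\<phi> i (aone A i) \<in> gen_submod A X (set L) i"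
      using T L Hom_Pmod_aone_in[OF \<phi>] \<open>i \<le> m\<close> by (auto simp: gens_below_def)
    then have "yoneda A X i (\<phi> i (aone A i)) \<in> comp_image A (Pmod A) (map fst L) X i"
      using T L by (intro yoneda_in_comp_image) (auto simp: gens_below_def)
    then show "\<phi> \<in> comp_image A (Pmod A) (map fst L) X i"
      using Hom_Pmod_eq_yoneda[OF \<phi>] by simp
  qed
  moreover have "\<forall>t\<in>set (map fst L). t \<le> m" using T L by (auto simp: gens_below_def)
  ultimately show ?thesis using that by blast
qed

end

theorem corollary2p5:
  fixes A :: "('k::field) zalg"
  assumes "coherent_zalg A"
  shows "coherent_seq A (coherent_mod A) (Pmod A)"
proof -
  interpret zalgebra A using assms by unfold_locales (simp add: coherent_zalg_def)
  have fin_gen: "coherent_mod A X \<Longrightarrow> fin_gen A X" for X by (simp add: coherent_mod_def)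
  have "projective_seq A (coherent_mod A) (Pmod A)"
    using assms fin_gen by (intro projective_seq_Pmod) (auto simp: coherent_zalg_def fin_gen_def)
  moreover have "\<exists>ids. (\<forall>t\<in>set ids. t \<le> m) \<and> (\<exists>n. \<forall>i<n. Hom A (Pmod A i) X \<subseteq> comp_image A (Pmod A) ids X i)"
    if X: "coherent_mod A X" for X m
  proof -
    obtain ids where "\<forall>t\<in>set ids. t \<le> m" "\<forall>i\<le>m. Hom A (Pmod A i) X \<subseteq> comp_image A (Pmod A) ids X i"
      using Hom_Pmod_subset_comp_image[OF assms fin_gen[OF X]] .
    then show ?thesis by (intro exI[of _ ids] conjI exI[of _ "m + 1"]) auto
  qed
  ultimately show ?thesis unfolding coherent_seq_def by blast
qed

end
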